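(* Let $(G,* )$ be a topological group satisfying ${\sf S}_c(\mathcal{O}_{\sf nbd},\mathcal{O})$ and let $(H,* )$ be a topological group satisfying ${\sf S}_c(\mathcal{O}_{\sf nbd},\mathcal{O}^{cgp})$. Then the product group $G\times H$ satisfies ${\sf S}_c(\mathcal{O}_{\sf nbd},\mathcal{O})$.
   Context: For a topological group $(G,* )$ with identity $e$ and a neighborhood $U$ of $e$, $\mathcal{O}(U)=\{x*U:x\in G\}$ and $\mathcal{O}_{\sf nbd}=\{\mathcal{O}(U):U\text{ a neighborhood of }e\}$. $\mathcal{O}$ is the collection of all open covers. An open cover $\mathcal{U}$ is c-groupable if there is a partition $\mathcal{U}=\bigcup_{n<\infty}\mathcal{U}_n$ where each $\mathcal{U}_n$ is pairwise disjoint and each point lies in all but finitely many of the sets $\bigcup\mathcal{U}_n$; $\mathcal{O}^{cgp}$ denotes the collection of c-groupable open covers. A family $\mathcal{B}$ refines $\mathcal{A}$ if every member of $\mathcal{B}$ is contained in some member of $\mathcal{A}$. ${\sf S}_c(\mathcal{A},\mathcal{B})$: for each sequence $(A_n:n<\infty)$ of elements of $\mathcal{A}$ there is a sequence $(B_n:n<\infty)$ such that each $B_n$ is a pairwise disjoint family of open sets refining $A_n$ and $\bigcup_nB_n\in\mathcal{B}$. *)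

theory Defs
  imports "HOL-Analysis.Analysis"
begin

text \<open>Topological groups are modelled by the type class topological_group_add
  (group operation written additively, not assumed commutative, identity 0).
  The selection principle is stated for an explicit group operation m and identity e
  on a topological space type, so that it can also be applied to the product group.\<close>

definition open_cover :: "'a::topological_space set set \<Rightarrow> bool" where
  "open_cover C \<longleftrightarrow> (\<forall>V\<in>C. open V) \<and> \<Union>C = UNIV"

definition cgp_cover :: "'a::topological_space set set \<Rightarrow> bool" where
  "cgp_cover C \<longleftrightarrow> open_cover C \<and>
     (\<exists>P :: nat \<Rightarrow> 'a set set.
        (\<Union>n. P n) = C \<and>
        (\<forall>n k. n \<noteq> k \<longrightarrow> P n \<inter> P k = {}) \<and>
        (\<forall>n. disjoint (P n)) \<and>
        (\<forall>x. \<forall>\<^sub>F n in sequentially. x \<in> \<Union>(P n)))"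

definition Sc_nbd :: "('a::topological_space \<Rightarrow> 'a \<Rightarrow> 'a) \<Rightarrow> 'a \<Rightarrow> ('a set set \<Rightarrow> bool) \<Rightarrow> bool" where
  "Sc_nbd m e Target \<longleftrightarrow>
     (\<forall>U :: nat \<Rightarrow> 'a set. (\<forall>n. open (U n) \<and> e \<in> U n) \<longrightarrow>
        (\<exists>B :: nat \<Rightarrow> 'a set set.
           (\<forall>n. (\<forall>b\<in>B n. open b) \<and> disjoint (B n) \<and>
                (\<forall>b\<in>B n. \<exists>x. b \<subseteq> m x ` U n)) \<and>
           Target (\<Union>n. B n)))"

definition prod_op :: "('a::plus \<times> 'b::plus) \<Rightarrow> 'a \<times> 'b \<Rightarrow> 'a \<times> 'b" where
  "prod_op p q = (fst p + fst q, snd p + snd q)"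

end

theory Submission
  imports Defs
begin

(* Given neighbourhoods W n of the identity of G x H we shrink them to decreasing boxes
   UG n x UH n.  Applying the principle of H to (UH (2n+1)) yields families C n whose union
   is c-groupable, i.e. carries an index function idx with disjoint fibres such that every
   point of H is covered by the fibre of idx at k for all large k.  Applying the principle of
   G countably often and merging yields families A k refining UG (2k+1) such that every tail
   (A k)_{k>=j} covers G.  Each set c of the H-cover is given the "slot"
   2 lev(c) or 2 idx(c)+1 (lev(c) = first n with c in C n), whichever is smaller; the slot
   fibres are disjoint because they lie inside a single C l or a single idx-fibre.  The
   rectangles a x c with a in A (idx c), grouped by the slot of c, are then disjoint open
   refinements of the boxes, and they cover G x H. *)

definition disjoint_open_refinement ::
    "('a::topological_space \<Rightarrow> 'a \<Rightarrow> 'a) \<Rightarrow> 'a set \<Rightarrow> 'a set set \<Rightarrow> bool" where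
  "disjoint_open_refinement m U B \<longleftrightarrow>
     (\<forall>b\<in>B. open b) \<and> disjoint B \<and> (\<forall>b\<in>B. \<exists>x. b \<subseteq> m x ` U)"

lemma Sc_nbd_iff:
  "Sc_nbd m e T \<longleftrightarrow>
     (\<forall>U :: nat \<Rightarrow> 'a::topological_space set. (\<forall>n. open (U n) \<and> e \<in> U n) \<longrightarrow>
        (\<exists>B. (\<forall>n. disjoint_open_refinement m (U n) (B n)) \<and> T (\<Union>n. B n)))"
  unfolding Sc_nbd_def disjoint_open_refinement_def by blast

lemma disjoint_open_refinement_mono:
  assumes "disjoint_open_refinement m U B" and "U \<subseteq> V"
  shows "disjoint_open_refinement m V B"
  using assms unfolding disjoint_open_refinement_def by (meson image_mono order_trans)

lemma prod_op_image_Times: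
  "prod_op (x, y) ` (U \<times> V) = ((+) x ` U) \<times> ((+) y ` V)"
  by (force simp: prod_op_def)

lemma disjoint_rectangles:
  assumes "disjoint \<C>" and "\<And>c. c \<in> \<C> \<Longrightarrow> disjoint (\<A> c)"
  shows "disjoint {a \<times> c | a c. c \<in> \<C> \<and> a \<in> \<A> c}"
proof (rule pairwiseI)
  fix b b' assume "b \<in> {a \<times> c | a c. c \<in> \<C> \<and> a \<in> \<A> c}"
    and "b' \<in> {a \<times> c | a c. c \<in> \<C> \<and> a \<in> \<A> c}" and "b \<noteq> b'"
  then obtain a c a' c' where b: "b = a \<times> c" "c \<in> \<C>" "a \<in> \<A> c"
    and b': "b' = a' \<times> c'" "c' \<in> \<C>" "a' \<in> \<A> c'"
    by blast
  have "disjnt c c' \<or> disjnt a a'"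
  proof (cases "c = c'")
    case True
    then have "a \<noteq> a'" using b b' \<open>b \<noteq> b'\<close> by blast
    then show ?thesis using True b b' assms(2) by (auto simp: pairwise_def)
  next
    case False
    then show ?thesis using b b' assms(1) by (auto simp: pairwise_def)
  qed
  then show "disjnt b b'"
    using b b' by (auto simp: disjnt_def)
qed

lemma disjoint_open_refinement_rectangles:
  fixes U :: "'a::{topological_space,plus} set" and V :: "'b::{topological_space,plus} set"
  assumes \<C>: "disjoint_open_refinement (+) V \<C>"
    and \<A>: "\<And>c. c \<in> \<C> \<Longrightarrow> disjoint_open_refinement (+) U (\<A> c)"
  shows "disjoint_open_refinement prod_op (U \<times> V) {a \<times> c | a c. c \<in> \<C> \<and> a \<in> \<A> c}"
  unfolding disjoint_open_refinement_def
proof (intro conjI ballI)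
  have "disjoint \<C>" and "\<And>c. c \<in> \<C> \<Longrightarrow> disjoint (\<A> c)"
    using \<C> \<A> unfolding disjoint_open_refinement_def by blast+
  then show "disjoint {a \<times> c | a c. c \<in> \<C> \<and> a \<in> \<A> c}"
    by (rule disjoint_rectangles)
next
  fix b assume "b \<in> {a \<times> c | a c. c \<in> \<C> \<and> a \<in> \<A> c}"
  then obtain a c where b: "b = a \<times> c" "c \<in> \<C>" "a \<in> \<A> c" by blast
  obtain y where "open c" "c \<subseteq> (+) y ` V"
    using \<C> b(2) unfolding disjoint_open_refinement_def by blast
  moreover obtain x where "open a" "a \<subseteq> (+) x ` U"
    using \<A>[OF b(2)] b(3) unfolding disjoint_open_refinement_def by blast
  ultimately have "open b" and "b \<subseteq> prod_op (x, y) ` (U \<times> V)"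
    unfolding b(1) prod_op_image_Times by (auto simp: open_Times)
  then show "open b" and "\<exists>p. b \<subseteq> prod_op p ` (U \<times> V)"
    by blast+
qed

lemma decreasing_nbd_sequence:
  fixes U :: "nat \<Rightarrow> 'a::topological_space set"
  assumes "\<And>n. open (U n) \<and> e \<in> U n"
  obtains V where "\<And>n. open (V n) \<and> e \<in> V n" and "\<And>n. V n \<subseteq> U n" and "decseq V"
proof
  show "open (\<Inter>i\<le>n. U i) \<and> e \<in> (\<Inter>i\<le>n. U i)" for n
    using assms by auto
  show "(\<Inter>i\<le>n. U i) \<subseteq> U n" for n
    by blast
  show "decseq (\<lambda>n. \<Inter>i\<le>n. U i)"
    unfolding decseq_def by auto
qed

lemma decreasing_boxes:
  fixes W :: "nat \<Rightarrow> ('a::topological_space \<times> 'b::topological_space) set"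
  assumes "\<And>n. open (W n) \<and> (e1, e2) \<in> W n"
  obtains UG UH where "\<And>n. open (UG n) \<and> e1 \<in> UG n" and "\<And>n. open (UH n) \<and> e2 \<in> UH n"
    and "decseq UG" and "decseq UH" and "\<And>n. UG n \<times> UH n \<subseteq> W n"
proof -
  have "\<exists>S T. open S \<and> open T \<and> e1 \<in> S \<and> e2 \<in> T \<and> S \<times> T \<subseteq> W n" for n
  proof -
    obtain S T where "open S" "open T" "(e1, e2) \<in> S \<times> T" "S \<times> T \<subseteq> W n"
    proof (rule open_prod_elim)
      show "open (W n)" and "(e1, e2) \<in> W n" using assms[of n] by simp_all
    qed
    then show ?thesis by blast
  qed
  then obtain S T where "\<And>n. open (S n) \<and> open (T n) \<and> e1 \<in> S n \<and> e2 \<in> T n \<and> S n \<times> T n \<subseteq> W n"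
    by metis
  then have S: "\<And>n. open (S n) \<and> e1 \<in> S n" and T: "\<And>n. open (T n) \<and> e2 \<in> T n"
    and box: "\<And>n. S n \<times> T n \<subseteq> W n"
    by simp_all
  obtain UG where UG: "\<And>n. open (UG n) \<and> e1 \<in> UG n" "\<And>n. UG n \<subseteq> S n" "decseq UG"
    using decreasing_nbd_sequence[of S e1, OF S] by blast
  obtain UH where UH: "\<And>n. open (UH n) \<and> e2 \<in> UH n" "\<And>n. UH n \<subseteq> T n" "decseq UH"
    using decreasing_nbd_sequence[of T e2, OF T] by blast
  have "UG n \<times> UH n \<subseteq> W n" for n
    using Sigma_mono[OF UG(2) UH(2)] box by (rule order_trans)
  then show thesis
    by (rule that[OF UG(1) UH(1) UG(3) UH(3)])
qed

text \<open>Applying S_c(O_nbd, O) along the rows of an enumeration of nat x nat gives one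
  sequence of selections whose every tail still covers the space.\<close>
lemma Sc_nbd_tail_covers:
  fixes V :: "nat \<Rightarrow> 'a::topological_space set"
  assumes "Sc_nbd m e open_cover" and "\<And>n. open (V n) \<and> e \<in> V n"
  obtains A where "\<And>k. disjoint_open_refinement m (V k) (A k)"
    and "\<And>j x. \<exists>k\<ge>j. x \<in> \<Union>(A k)"
proof -
  have "\<exists>A'. \<forall>j. (\<forall>i. disjoint_open_refinement m (V (prod_encode (j, i))) (A' j i))
                   \<and> open_cover (\<Union>i. A' j i)"
  proof (rule choice, rule allI)
    fix j
    have "\<forall>i. open (V (prod_encode (j, i))) \<and> e \<in> V (prod_encode (j, i))"
      using assms(2) by blast
    with spec[OF assms(1)[unfolded Sc_nbd_iff], of "\<lambda>i. V (prod_encode (j, i))"]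
    show "\<exists>A. (\<forall>i. disjoint_open_refinement m (V (prod_encode (j, i))) (A i))
               \<and> open_cover (\<Union>i. A i)"
      by (rule mp)
  qed
  then obtain A' where ref: "\<And>j i. disjoint_open_refinement m (V (prod_encode (j, i))) (A' j i)"
    and cov: "\<And>j. open_cover (\<Union>i. A' j i)"
    by blast
  define A where "A k = A' (fst (prod_decode k)) (snd (prod_decode k))" for k
  show thesis
  proof
    show "disjoint_open_refinement m (V k) (A k)" for k
      using ref[of "fst (prod_decode k)" "snd (prod_decode k)"] by (simp add: A_def)
  next
    fix j x
    have "\<Union>(\<Union>i. A' j i) = UNIV"
      using cov[of j] unfolding open_cover_def by (rule conjunct2)
    then have "x \<in> \<Union>(\<Union>i. A' j i)"
      by (simp only: UNIV_I)
    then obtain i where "x \<in> \<Union>(A' j i)"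
      by blast
    moreover have "A (prod_encode (j, i)) = A' j i" by (simp add: A_def)
    ultimately show "\<exists>k\<ge>j. x \<in> \<Union>(A k)"
      using le_prod_encode_1[of j i] by blast
  qed
qed

lemma cgp_cover_index:
  assumes "cgp_cover \<C>"
  obtains idx :: "'a::topological_space set \<Rightarrow> nat"
  where "\<And>k. disjoint {c \<in> \<C>. idx c = k}"
    and "\<And>y. \<forall>\<^sub>F k in sequentially. \<exists>c\<in>\<C>. idx c = k \<and> y \<in> c"
proof -
  obtain P :: "nat \<Rightarrow> 'a set set" where P: "(\<Union>n. P n) = \<C>"
    and sep: "\<And>n k. n \<noteq> k \<Longrightarrow> P n \<inter> P k = {}" and disj: "\<And>n. disjoint (P n)"
    and ev: "\<And>y. \<forall>\<^sub>F n in sequentially. y \<in> \<Union>(P n)"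
    using assms unfolding cgp_cover_def by blast
  define idx where "idx c = (LEAST n. c \<in> P n)" for c
  have idx_eq: "idx c = k" if "c \<in> P k" for c k
  proof -
    have "c \<in> P (idx c)" unfolding idx_def using that by (rule LeastI)
    then show ?thesis using sep that by blast
  qed
  show thesis
  proof
    have "{c \<in> \<C>. idx c = k} \<subseteq> P k" for k
      using P idx_eq by blast
    then show "disjoint {c \<in> \<C>. idx c = k}" for k
      using disj pairwise_subset by blast
  next
    show "\<forall>\<^sub>F k in sequentially. \<exists>c\<in>\<C>. idx c = k \<and> y \<in> c" for y
      using ev[of y] by eventually_elim (use P idx_eq in blast)
  qed
qed

lemma product_rectangle_selection:
  fixes UG :: "nat \<Rightarrow> 'a::{topological_space,plus} set"
    and UH :: "nat \<Rightarrow> 'b::{topological_space,plus} set"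
  assumes "decseq UG" and "decseq UH"
    and A_ref: "\<And>k. disjoint_open_refinement (+) (UG (2*k+1)) (A k)"
    and A_tail: "\<And>j x. \<exists>k\<ge>j. x \<in> \<Union>(A k)"
    and C_ref: "\<And>n. disjoint_open_refinement (+) (UH (2*n+1)) (C n)"
    and C_cgp: "cgp_cover (\<Union>n. C n)"
  shows "\<exists>B. (\<forall>m. disjoint_open_refinement prod_op (UG m \<times> UH m) (B m))
             \<and> open_cover (\<Union>m. B m)"
proof -
  obtain idx where idx_disj: "\<And>k. disjoint {c \<in> (\<Union>n. C n). idx c = k}"
    and idx_ev: "\<And>y. \<forall>\<^sub>F k in sequentially. \<exists>c\<in>(\<Union>n. C n). idx c = k \<and> y \<in> c"
    using cgp_cover_index[OF C_cgp] by blast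
  define lev where "lev c = (LEAST n. c \<in> C n)" for c
  define slot where "slot c = (if lev c \<le> idx c then 2 * lev c else 2 * idx c + 1)" for c
  define \<C> where "\<C> m = {c \<in> (\<Union>n. C n). slot c = m}" for m
  define B where "B m = {a \<times> c | a c. c \<in> \<C> m \<and> a \<in> A (idx c)}" for m
  have lev: "c \<in> C (lev c)" if "c \<in> C n" for c n
    using that unfolding lev_def by (rule LeastI)
  \<comment> \<open>each slot fibre lies inside a single C l or a single idx-fibre\<close>
  have \<C>_disj: "disjoint (\<C> m)" for m
  proof (cases "even m")
    case True
    then have "\<C> m \<subseteq> C (m div 2)"
      using lev by (auto simp: \<C>_def slot_def split: if_splits)
    then show ?thesis
      using C_ref pairwise_subset unfolding disjoint_open_refinement_def by blast
  next
    case False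
    then have "\<C> m \<subseteq> {c \<in> (\<Union>n. C n). idx c = m div 2}"
      by (auto simp: \<C>_def slot_def split: if_splits)
    then show ?thesis
      using idx_disj pairwise_subset by blast
  qed
  \<comment> \<open>the slot of c never exceeds the indices of the neighbourhoods refined by c and by A (idx c)\<close>
  have slot_le: "slot c \<le> 2 * lev c + 1" "slot c \<le> 2 * idx c + 1" for c
    by (auto simp: slot_def)
  have \<C>_ref: "disjoint_open_refinement (+) (UH m) (\<C> m)" for m
    unfolding disjoint_open_refinement_def
  proof (intro conjI ballI)
    fix c assume c: "c \<in> \<C> m"
    then have "c \<in> C (lev c)"
      using lev by (auto simp: \<C>_def)
    then obtain y where "open c" and "c \<subseteq> (+) y ` UH (2 * lev c + 1)"
      using C_ref[of "lev c"] unfolding disjoint_open_refinement_def by blast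
    moreover have "slot c = m"
      using c by (simp add: \<C>_def)
    then have "UH (2 * lev c + 1) \<subseteq> UH m"
      using decseqD[OF \<open>decseq UH\<close> slot_le(1)[of c]] by simp
    ultimately show "open c" and "\<exists>y. c \<subseteq> (+) y ` UH m"
      by (meson image_mono order_trans)+
  qed (fact \<C>_disj)
  have A_ref': "disjoint_open_refinement (+) (UG m) (A (idx c))" if "c \<in> \<C> m" for c m
  proof -
    have "slot c = m"
      using that by (simp add: \<C>_def)
    then show ?thesis
      using disjoint_open_refinement_mono[OF A_ref decseqD[OF \<open>decseq UG\<close> slot_le(2)[of c]]]
      by simp
  qed
  have B_ref: "disjoint_open_refinement prod_op (UG m \<times> UH m) (B m)" for m
    unfolding B_def by (rule disjoint_open_refinement_rectangles[OF \<C>_ref A_ref'])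
  have B_covers: "p \<in> \<Union>(\<Union>m. B m)" for p :: "'a \<times> 'b"
  proof -
    obtain x y where p: "p = (x, y)" by (cases p)
    obtain k0 where k0: "\<And>k. k \<ge> k0 \<Longrightarrow> \<exists>c\<in>(\<Union>n. C n). idx c = k \<and> y \<in> c"
      using idx_ev[of y] unfolding eventually_sequentially by blast
    obtain k a where "k \<ge> k0" "a \<in> A k" "x \<in> a"
      using A_tail[of k0 x] by blast
    moreover obtain c where "c \<in> (\<Union>n. C n)" "idx c = k" "y \<in> c"
      using k0[OF \<open>k \<ge> k0\<close>] by blast
    ultimately have "c \<in> \<C> (slot c)" and "a \<in> A (idx c)" and "p \<in> a \<times> c"
      using p by (simp_all add: \<C>_def)
    then have "a \<times> c \<in> B (slot c)" and "p \<in> a \<times> c"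
      unfolding B_def by blast+
    then show ?thesis by blast
  qed
  have "open_cover (\<Union>m. B m)"
    unfolding open_cover_def
  proof
    show "\<forall>b\<in>\<Union>m. B m. open b"
      using B_ref unfolding disjoint_open_refinement_def by blast
    show "\<Union>(\<Union>m. B m) = UNIV"
      using B_covers by blast
  qed
  with B_ref show ?thesis by blast
qed

theorem theorem3p1:
  assumes "Sc_nbd ((+) :: 'a::topological_group_add \<Rightarrow> 'a \<Rightarrow> 'a) 0 open_cover"
      and "Sc_nbd ((+) :: 'b::topological_group_add \<Rightarrow> 'b \<Rightarrow> 'b) 0 cgp_cover"
  shows "Sc_nbd (prod_op :: 'a \<times> 'b \<Rightarrow> 'a \<times> 'b \<Rightarrow> 'a \<times> 'b) (0, 0) open_cover"
  unfolding Sc_nbd_iff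
proof (intro allI impI)
  fix W :: "nat \<Rightarrow> ('a \<times> 'b) set"
  assume "\<forall>n. open (W n) \<and> (0, 0) \<in> W n"
  then have W: "\<And>n. open (W n) \<and> (0, 0) \<in> W n" by blast
  obtain UG UH where UG: "\<And>n. open (UG n) \<and> (0::'a) \<in> UG n"
    and UH: "\<And>n. open (UH n) \<and> (0::'b) \<in> UH n"
    and dec: "decseq UG" "decseq UH" and box: "\<And>n. UG n \<times> UH n \<subseteq> W n"
    using decreasing_boxes[of W 0 0, OF W] by blast
  obtain A where "\<And>k. disjoint_open_refinement (+) (UG (2*k+1)) (A k)"
    and "\<And>j x. \<exists>k\<ge>j. x \<in> \<Union>(A k)"
    using Sc_nbd_tail_covers[where V="\<lambda>k. UG (2*k+1)", OF assms(1) UG] by blast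
  moreover have "\<forall>n. open (UH (2*n+1)) \<and> (0::'b) \<in> UH (2*n+1)"
    using UH by blast
  then obtain C where "\<And>n. disjoint_open_refinement (+) (UH (2*n+1)) (C n)"
    and "cgp_cover (\<Union>n. C n)"
    using spec[OF assms(2)[unfolded Sc_nbd_iff], of "\<lambda>n. UH (2*n+1)"] by blast
  ultimately obtain B where "\<And>m. disjoint_open_refinement prod_op (UG m \<times> UH m) (B m)"
    and "open_cover (\<Union>m. B m)"
    using product_rectangle_selection[OF dec] by blast
  then show "\<exists>B. (\<forall>n. disjoint_open_refinement prod_op (W n) (B n)) \<and> open_cover (\<Union>n. B n)"
    using disjoint_open_refinement_mono[OF _ box] by blast
qed

end
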